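(* Let $f:X\to Y$ be a continuous surjection between topological spaces and let $\mathcal B$ be a $\pi$-base for $Y$ (consisting of non-empty open sets). Then the family $\{f^{-1}(V):V\in\mathcal B\}$ is a skeletal family if and only if $f$ is a skeletal map.
   Context: A continuous surjection $f:X\to Y$ is skeletal if for every non-empty open $U\subseteq X$ the closure of $f[U]$ has non-empty interior. A family $\mathcal P$ of open subsets of $X$ is a skeletal family if for every non-empty open $V\subseteq X$ there exists $W\in\mathcal P$ such that every non-empty $U\in\mathcal P$ with $U\subseteq W$ satisfies $U\cap V\neq\emptyset$. *)

theory Defs
  imports "HOL-Analysis.Analysis"
begin

definition skeletal_map :: "'a topology \<Rightarrow> 'b topology \<Rightarrow> ('a \<Rightarrow> 'b) \<Rightarrow> bool" where
  "skeletal_map X Y f \<longleftrightarrow>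
     continuous_map X Y f \<and> f ` topspace X = topspace Y \<and>
     (\<forall>U. openin X U \<and> U \<noteq> {} \<longrightarrow> Y interior_of (Y closure_of (f ` U)) \<noteq> {})"

definition skeletal_family :: "'a topology \<Rightarrow> 'a set set \<Rightarrow> bool" where
  "skeletal_family X P \<longleftrightarrow>
     (\<forall>U\<in>P. openin X U) \<and>
     (\<forall>V. openin X V \<and> V \<noteq> {} \<longrightarrow>
        (\<exists>W\<in>P. \<forall>U\<in>P. U \<noteq> {} \<and> U \<subseteq> W \<longrightarrow> U \<inter> V \<noteq> {}))"

definition pi_base :: "'b topology \<Rightarrow> 'b set set \<Rightarrow> bool" where
  "pi_base Y B \<longleftrightarrow>
     (\<forall>V\<in>B. openin Y V \<and> V \<noteq> {}) \<and>
     (\<forall>G. openin Y G \<and> G \<noteq> {} \<longrightarrow> (\<exists>V\<in>B. V \<subseteq> G))"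

end

theory Submission
  imports Defs
begin

text \<open>The closure of a set A has non-empty interior exactly when some member W of a \<pi>-base
  is such that every \<pi>-base set inside W meets A. For a surjection, taking preimages preserves and
  reflects inclusion, and a preimage meets an open set U of X iff the set itself meets f ` U; so the
  skeletal family condition for the preimage family is precisely this criterion for every f ` U.\<close>

lemma pi_base_interior_closure_nonempty_iff:
  assumes "pi_base Y B" and "A \<subseteq> topspace Y"
  shows "Y interior_of (Y closure_of A) \<noteq> {} \<longleftrightarrow> (\<exists>W\<in>B. \<forall>V\<in>B. V \<subseteq> W \<longrightarrow> V \<inter> A \<noteq> {})"
proof -
  have B_open: "openin Y V" "V \<noteq> {}" if "V \<in> B" for V
    using assms(1) that by (auto simp: pi_base_def)
  have B_inside: "\<exists>V\<in>B. V \<subseteq> G" if "openin Y G" "G \<noteq> {}" for G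
    using assms(1) that by (auto simp: pi_base_def)
  show ?thesis
  proof
    assume "Y interior_of (Y closure_of A) \<noteq> {}"
    then obtain W where W: "W \<in> B" "W \<subseteq> Y interior_of (Y closure_of A)"
      using B_inside[OF openin_interior_of] by blast
    have "V \<inter> A \<noteq> {}" if "V \<in> B" "V \<subseteq> W" for V
    proof -
      have "V \<subseteq> Y closure_of A"
        using that(2) W(2) interior_of_subset by (metis order_trans)
      then have "V \<inter> Y closure_of A \<noteq> {}"
        using B_open(2)[OF that(1)] by blast
      then show ?thesis
        using openin_Int_closure_of_eq_empty[OF B_open(1)[OF that(1)]] by blast
    qed
    with W(1) show "\<exists>W\<in>B. \<forall>V\<in>B. V \<subseteq> W \<longrightarrow> V \<inter> A \<noteq> {}" by blast
  next
    assume "\<exists>W\<in>B. \<forall>V\<in>B. V \<subseteq> W \<longrightarrow> V \<inter> A \<noteq> {}"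
    then obtain W where W: "W \<in> B" and meets: "\<And>V. V \<in> B \<Longrightarrow> V \<subseteq> W \<Longrightarrow> V \<inter> A \<noteq> {}"
      by blast
    show "Y interior_of (Y closure_of A) \<noteq> {}"
    proof
      assume "Y interior_of (Y closure_of A) = {}"
      then have "\<not> W \<subseteq> Y closure_of A"
        using interior_of_maximal[OF _ B_open(1)[OF W]] B_open(2)[OF W] by blast
      moreover have "openin Y (W - Y closure_of A)"
        using B_open(1)[OF W] by (simp add: openin_diff)
      ultimately obtain V where "V \<in> B" "V \<subseteq> W - Y closure_of A"
        using B_inside by blast
      then show False
        using meets closure_of_subset[OF assms(2)] by blast
    qed
  qed
qed

lemma preimage_subset_preimage_iff:
  assumes "f ` topspace X = topspace Y" and "V \<subseteq> topspace Y"
  shows "{x \<in> topspace X. f x \<in> V} \<subseteq> {x \<in> topspace X. f x \<in> W} \<longleftrightarrow> V \<subseteq> W"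
proof
  assume sub: "{x \<in> topspace X. f x \<in> V} \<subseteq> {x \<in> topspace X. f x \<in> W}"
  show "V \<subseteq> W"
  proof
    fix y assume "y \<in> V"
    then obtain x where "x \<in> topspace X" "f x = y"
      using assms by (metis imageE subsetD)
    with sub \<open>y \<in> V\<close> show "y \<in> W" by blast
  qed
qed auto

lemma preimage_eq_empty_iff:
  assumes "f ` topspace X = topspace Y" and "V \<subseteq> topspace Y"
  shows "{x \<in> topspace X. f x \<in> V} = {} \<longleftrightarrow> V = {}"
  using preimage_subset_preimage_iff[OF assms, of "{}"] by blast

lemma skeletal_family_preimages_iff:
  assumes "continuous_map X Y f" and "f ` topspace X = topspace Y" and "pi_base Y B"
  shows "skeletal_family X ((\<lambda>V. {x \<in> topspace X. f x \<in> V}) ` B) \<longleftrightarrow>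
    (\<forall>U. openin X U \<and> U \<noteq> {} \<longrightarrow> (\<exists>W\<in>B. \<forall>V\<in>B. V \<subseteq> W \<longrightarrow> V \<inter> f ` U \<noteq> {}))"
proof -
  let ?pre = "\<lambda>V. {x \<in> topspace X. f x \<in> V}"
  have B_sub: "V \<subseteq> topspace Y" "V \<noteq> {}" if "V \<in> B" for V
    using assms(3) openin_subset that by (auto simp: pi_base_def)
  have preimages_open: "\<forall>V\<in>B. openin X (?pre V)"
    using assms(1,3) by (auto simp: pi_base_def continuous_map_def)
  have entry_iff: "(?pre V \<noteq> {} \<and> ?pre V \<subseteq> ?pre W \<longrightarrow> ?pre V \<inter> U \<noteq> {}) \<longleftrightarrow>
      (V \<subseteq> W \<longrightarrow> V \<inter> f ` U \<noteq> {})"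
    if "openin X U" "V \<in> B" for U V W
  proof -
    have "?pre V \<noteq> {}"
      using preimage_eq_empty_iff[OF assms(2) B_sub(1)[OF that(2)]] B_sub(2)[OF that(2)] by simp
    moreover have "?pre V \<inter> U \<noteq> {} \<longleftrightarrow> V \<inter> f ` U \<noteq> {}"
      using openin_subset[OF that(1)] by blast
    ultimately show ?thesis
      using preimage_subset_preimage_iff[OF assms(2) B_sub(1)[OF that(2)]] by simp
  qed
  have "(\<exists>W\<in>B. \<forall>V\<in>B. ?pre V \<noteq> {} \<and> ?pre V \<subseteq> ?pre W \<longrightarrow> ?pre V \<inter> U \<noteq> {}) \<longleftrightarrow>
      (\<exists>W\<in>B. \<forall>V\<in>B. V \<subseteq> W \<longrightarrow> V \<inter> f ` U \<noteq> {})"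
    if "openin X U" for U
    using entry_iff[OF that] by (intro bex_cong ball_cong refl) simp
  then show ?thesis
    by (auto simp: skeletal_family_def preimages_open)
qed

theorem proposition2:
  fixes X :: "'a topology" and Y :: "'b topology" and f :: "'a \<Rightarrow> 'b" and B :: "'b set set"
  assumes "continuous_map X Y f"
    and "f ` topspace X = topspace Y"
    and "pi_base Y B"
  shows "skeletal_family X ((\<lambda>V. {x \<in> topspace X. f x \<in> V}) ` B) \<longleftrightarrow> skeletal_map X Y f"
proof -
  have "Y interior_of (Y closure_of (f ` U)) \<noteq> {} \<longleftrightarrow>
      (\<exists>W\<in>B. \<forall>V\<in>B. V \<subseteq> W \<longrightarrow> V \<inter> f ` U \<noteq> {})"
    if "openin X U" for U
  proof (rule pi_base_interior_closure_nonempty_iff[OF assms(3)])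
    show "f ` U \<subseteq> topspace Y"
      using assms(2) openin_subset[OF that] by blast
  qed
  then show ?thesis
    unfolding skeletal_family_preimages_iff[OF assms] skeletal_map_def
    using assms(1,2) by blast
qed

end
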